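(* Let $d\ge2$, $\alpha\in\mathbb{R}$, and $f=x^{d-1}(\alpha x+dy)$, a real binary form of degree $d$. Then $f$ has real symmetric rank $d$, and its decompositions as a sum of $d$ real symmetric rank one terms are exactly (up to reordering) the expressions $$f=\sum_{i=1}^d\frac{(\lambda_ix+y)^d}{\prod_{j\ne i}(\lambda_i-\lambda_j)},$$ where $\lambda_1,\dots,\lambda_d\in\mathbb{R}$ are distinct and $\alpha=\lambda_1+\cdots+\lambda_d$.
   Context: Binary forms of degree $d$ are identified with symmetric tensors in $(\mathbb{R}^2)^{\otimes d}$ via $\mathcal{T}\leftrightarrow\sum_k\mathcal{T}(k_1|\dots|k_d)x_{k_1}\cdots x_{k_d}$ with $x_1=x$, $x_2=y$. A symmetric rank one term is $c\,\ell^d$ with $c\in\mathbb{R}$ and $\ell$ a real linear form; the symmetric rank is the minimal number of such terms summing to the form. *)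

theory Defs
  imports Complex_Main "HOL-Library.Multiset"
begin

text \<open>A real binary form of degree d is represented by its polynomial function
  \<open>real \<Rightarrow> real \<Rightarrow> real\<close> in the variables x, y (over the infinite field R a form
  is determined by its values). A symmetric rank one term c * (a x + b y)^d is
  given by a triple (c, a, b).\<close>

definition rank_one_term :: "nat \<Rightarrow> real \<times> real \<times> real \<Rightarrow> (real \<Rightarrow> real \<Rightarrow> real)" where
  "rank_one_term d t = (case t of (c, a, b) \<Rightarrow> (\<lambda>x y. c * (a * x + b * y) ^ d))"

definition is_sym_decomp :: "nat \<Rightarrow> (real \<Rightarrow> real \<Rightarrow> real) \<Rightarrow> (real \<times> real \<times> real) list \<Rightarrow> bool" where
  "is_sym_decomp d f ts \<longleftrightarrow> (\<forall>x y. f x y = (\<Sum>t\<leftarrow>ts. rank_one_term d t x y))"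

definition real_sym_rank :: "nat \<Rightarrow> (real \<Rightarrow> real \<Rightarrow> real) \<Rightarrow> nat" where
  "real_sym_rank d f = (LEAST r. \<exists>ts. length ts = r \<and> is_sym_decomp d f ts)"

end

theory Submission
  imports Defs "HOL-Computational_Algebra.Polynomial"
begin

text \<open>Expanding \<open>c (a x + b y)^d\<close> binomially, a list of terms decomposes \<open>x^(d-1) (\<alpha> x + d y)\<close>
  iff its moments \<open>\<Sum> c a^k b^(d-k)\<close> are \<open>0\<close> for \<open>k < d - 1\<close>, \<open>1\<close> for \<open>k = d - 1\<close> and \<open>\<alpha>\<close> for
  \<open>k = d\<close>. For \<open>k < d\<close> these are power sums \<open>\<Sum> w\<^sub>i \<lambda>\<^sub>i^k\<close> of weights \<open>w = c b^d\<close> at nodes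
  \<open>\<lambda> = a/b\<close>, so \<open>\<Sum> w\<^sub>i P(\<lambda>\<^sub>i)\<close> is the coefficient of \<open>X^(d-1)\<close> in every \<open>P\<close> of degree
  below \<open>d\<close>. A monic \<open>P\<close> of degree \<open>d - 1\<close> vanishing at all nodes of nonzero weight shows that
  there are at least \<open>d\<close> of them. With exactly \<open>d\<close> terms the Lagrange basis polynomials force
  \<open>w\<^sub>i = 1 / \<Prod>\<^bsub>j\<noteq>i\<^esub> (\<lambda>\<^sub>i - \<lambda>\<^sub>j)\<close>, and the top moment becomes \<open>\<Sum> \<lambda>\<^sub>i = \<alpha>\<close>, because
  interpolating \<open>X^d - \<Prod> (X - \<lambda>\<^sub>j)\<close> at the nodes gives \<open>\<Sum> \<lambda>\<^sub>i^d / \<Prod>\<^bsub>j\<noteq>i\<^esub> (\<lambda>\<^sub>i - \<lambda>\<^sub>j) = \<Sum> \<lambda>\<^sub>i\<close>.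
  Conversely, Lagrange interpolation shows that these terms do decompose the form.\<close>

lemma degree_prod_linear:
  fixes mu :: "'b \<Rightarrow> 'a::idom"
  assumes "finite A"
  shows "degree (\<Prod>j\<in>A. [:-mu j, 1:]) = card A"
proof -
  have "degree (\<Prod>j\<in>A. [:-mu j, 1:]) = (\<Sum>j\<in>A. degree [:-mu j, 1:])"
    by (rule degree_prod_eq_sum_degree) auto
  then show ?thesis by simp
qed

lemma coeff_prod_linear_card:
  fixes mu :: "'b \<Rightarrow> 'a::idom"
  assumes "finite A"
  shows "coeff (\<Prod>j\<in>A. [:-mu j, 1:]) (card A) = 1"
proof -
  have "lead_coeff (\<Prod>j\<in>A. [:-mu j, 1:]) = 1" by (simp add: lead_coeff_prod)
  then show ?thesis using degree_prod_linear[OF assms, of mu] by simp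
qed

lemma coeff_prod_linear_subleading:
  fixes mu :: "'b \<Rightarrow> 'a::idom"
  assumes "finite A" "A \<noteq> {}"
  shows "coeff (\<Prod>j\<in>A. [:-mu j, 1:]) (card A - 1) = - (\<Sum>j\<in>A. mu j)"
  using assms
proof (induction A rule: finite_ne_induct)
  case (singleton a)
  then show ?case by simp
next
  case (insert a A)
  define p where "p = (\<Prod>j\<in>A. [:-mu j, 1:])"
  obtain m where m: "card A = Suc m"
    using insert.hyps by (metis card_gt_0_iff gr0_implies_Suc)
  have "(\<Prod>j\<in>insert a A. [:-mu j, 1:]) = smult (- mu a) p + pCons 0 p"
    using insert.hyps by (simp add: p_def mult_pCons_left)
  moreover have "coeff p (card A) = 1"
    using coeff_prod_linear_card[OF insert.hyps(1)] by (simp add: p_def)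
  ultimately show ?case
    using insert m by (simp add: p_def)
qed

definition lagrange_denom :: "(nat \<Rightarrow> real) \<Rightarrow> nat \<Rightarrow> nat \<Rightarrow> real" where
  "lagrange_denom lam d i = (\<Prod>j\<in>{..<d}-{i}. (lam i - lam j))"

definition lagrange_basis :: "(nat \<Rightarrow> real) \<Rightarrow> nat \<Rightarrow> nat \<Rightarrow> real poly" where
  "lagrange_basis lam d i = (\<Prod>j\<in>{..<d}-{i}. [:-lam j, 1:])"

lemma lagrange_denom_nonzero:
  "inj_on lam {..<d} \<Longrightarrow> i < d \<Longrightarrow> lagrange_denom lam d i \<noteq> 0"
  unfolding lagrange_denom_def by (auto simp: inj_on_def)

lemma degree_lagrange_basis: "i < d \<Longrightarrow> degree (lagrange_basis lam d i) = d - 1"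
  unfolding lagrange_basis_def by (simp add: degree_prod_linear)

lemma coeff_lagrange_basis: "i < d \<Longrightarrow> coeff (lagrange_basis lam d i) (d - 1) = 1"
  using coeff_prod_linear_card[of "{..<d}-{i}" lam] unfolding lagrange_basis_def by simp

lemma poly_lagrange_basis:
  "k < d \<Longrightarrow> poly (lagrange_basis lam d i) (lam k) = (if k = i then lagrange_denom lam d i else 0)"
  unfolding lagrange_basis_def lagrange_denom_def poly_prod by auto

lemma lagrange_interpolation:
  assumes inj: "inj_on lam {..<d}" and deg: "degree P < d"
  shows "P = (\<Sum>i<d. smult (poly P (lam i) / lagrange_denom lam d i) (lagrange_basis lam d i))"
proof (rule poly_eqI_degree)
  show "poly P x = poly (\<Sum>i<d. smult (poly P (lam i) / lagrange_denom lam d i) (lagrange_basis lam d i)) x"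
    if "x \<in> lam ` {..<d}" for x
  proof -
    from that obtain k where k: "k < d" "x = lam k" by blast
    have "(\<Sum>i<d. poly P (lam i) / lagrange_denom lam d i * poly (lagrange_basis lam d i) (lam k))
        = (\<Sum>i<d. if i = k then poly P (lam k) else 0)"
      using k lagrange_denom_nonzero[OF inj] by (intro sum.cong) (auto simp: poly_lagrange_basis)
    then show ?thesis using k by (simp add: poly_sum)
  qed
  show "degree P < card (lam ` {..<d})"
    using deg inj by (simp add: card_image)
  have "degree (\<Sum>i<d. smult (poly P (lam i) / lagrange_denom lam d i) (lagrange_basis lam d i)) < d"
    if "d > 0"
    using that by (intro degree_sum_less) (auto intro: le_less_trans[OF degree_smult_le] simp: degree_lagrange_basis)
  then show "degree (\<Sum>i<d. smult (poly P (lam i) / lagrange_denom lam d i) (lagrange_basis lam d i))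
      < card (lam ` {..<d})"
    using deg inj by (cases "d = 0") (auto simp: card_image)
qed

lemma sum_div_lagrange_denom_eq_coeff:
  assumes inj: "inj_on lam {..<d}" and deg: "degree P < d"
  shows "(\<Sum>i<d. poly P (lam i) / lagrange_denom lam d i) = coeff P (d - 1)"
proof -
  have "coeff P (d - 1) = (\<Sum>i<d. poly P (lam i) / lagrange_denom lam d i * coeff (lagrange_basis lam d i) (d - 1))"
    by (subst lagrange_interpolation[OF inj deg]) (simp add: coeff_sum)
  also have "\<dots> = (\<Sum>i<d. poly P (lam i) / lagrange_denom lam d i)"
    by (intro sum.cong refl) (simp add: coeff_lagrange_basis del: One_nat_def)
  finally show ?thesis ..
qed

lemma sum_power_div_lagrange_denom:
  assumes "inj_on lam {..<d}" "k < d"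
  shows "(\<Sum>i<d. lam i ^ k / lagrange_denom lam d i) = (if k = d - 1 then 1 else 0)"
  using sum_div_lagrange_denom_eq_coeff[OF assms(1), of "monom 1 k"] assms(2)
  by (simp add: poly_monom degree_monom_eq coeff_monom)

lemma sum_power_degree_div_lagrange_denom:
  assumes inj: "inj_on lam {..<d}" and d: "d \<ge> 1"
  shows "(\<Sum>i<d. lam i ^ d / lagrange_denom lam d i) = (\<Sum>i<d. lam i)"
proof -
  define R where "R = (\<Prod>j\<in>{..<d}. [:-lam j, 1:])"
  define P where "P = monom 1 d - R"
  have deg_R: "degree R = d" and lead_R: "coeff R d = 1"
    using degree_prod_linear[of "{..<d}" lam] coeff_prod_linear_card[of "{..<d}" lam]
    by (simp_all add: R_def)
  have deg_P: "degree P < d"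
  proof -
    have "coeff P n = 0" if "n \<ge> d" for n
    proof (cases "n = d")
      case True
      then show ?thesis using deg_R lead_R by (simp add: P_def)
    qed (use that deg_R in \<open>simp add: P_def coeff_monom coeff_eq_0\<close>)
    then have "degree P \<le> d - 1" by (intro degree_le) auto
    with d show ?thesis by linarith
  qed
  have "(\<Sum>i<d. lam i ^ d / lagrange_denom lam d i) = (\<Sum>i<d. poly P (lam i) / lagrange_denom lam d i)"
    by (intro sum.cong) (auto simp: P_def R_def poly_monom poly_prod intro: prod_zero)
  also have "\<dots> = coeff P (d - 1)"
    by (rule sum_div_lagrange_denom_eq_coeff[OF inj deg_P])
  also have "\<dots> = (\<Sum>i<d. lam i)"
    using coeff_prod_linear_subleading[of "{..<d}" lam] d
    by (simp add: P_def R_def coeff_monom lessThan_empty_iff)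
  finally show ?thesis .
qed

lemma weighted_sum_poly_eq_coeff:
  fixes lam w :: "nat \<Rightarrow> real"
  assumes power_sums: "\<forall>k<d. (\<Sum>i<n. w i * lam i ^ k) = (if k = d - 1 then 1 else 0)"
    and deg: "degree P < d"
  shows "(\<Sum>i<n. w i * poly P (lam i)) = coeff P (d - 1)"
proof -
  have poly_P: "poly P x = (\<Sum>k<d. coeff P k * x ^ k)" for x
    unfolding poly_altdef using deg by (intro sum.mono_neutral_left) (auto simp: coeff_eq_0)
  have "(\<Sum>i<n. w i * poly P (lam i)) = (\<Sum>i<n. \<Sum>k<d. coeff P k * (w i * lam i ^ k))"
    unfolding poly_P by (simp add: sum_distrib_left mult_ac)
  also have "\<dots> = (\<Sum>k<d. coeff P k * (\<Sum>i<n. w i * lam i ^ k))"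
    by (subst sum.swap) (simp add: sum_distrib_left)
  also have "\<dots> = (\<Sum>k<d. if k = d - 1 then coeff P k else 0)"
    using power_sums by (intro sum.cong) auto
  also have "\<dots> = coeff P (d - 1)"
    using deg by (simp add: sum.delta)
  finally show ?thesis .
qed

lemma card_support_nodes_ge:
  fixes lam w :: "nat \<Rightarrow> real"
  assumes power_sums: "\<forall>k<d. (\<Sum>i<n. w i * lam i ^ k) = (if k = d - 1 then 1 else 0)"
    and d: "d \<ge> 1"
  shows "d \<le> card (lam ` {i. i < n \<and> w i \<noteq> 0})"
proof (rule ccontr)
  define \<Lambda> where "\<Lambda> = lam ` {i. i < n \<and> w i \<noteq> 0}"
  assume "\<not> d \<le> card (lam ` {i. i < n \<and> w i \<noteq> 0})"
  then have card_\<Lambda>: "card \<Lambda> < d" unfolding \<Lambda>_def by simp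
  have fin: "finite \<Lambda>" unfolding \<Lambda>_def by simp
  define R where "R = (\<Prod>\<mu>\<in>\<Lambda>. [:-\<mu>, 1:])"
  define P where "P = monom 1 (d - 1 - card \<Lambda>) * R"
  have deg_R: "degree R = card \<Lambda>" and lead_R: "lead_coeff R = 1"
    unfolding R_def using fin by (simp_all add: degree_prod_linear coeff_prod_linear_card)
  then have "R \<noteq> 0" by auto
  then have deg_P: "degree P = d - 1"
    unfolding P_def using deg_R card_\<Lambda> by (subst degree_mult_eq) (auto simp: degree_monom_eq)
  moreover have "lead_coeff P = 1"
    unfolding P_def lead_coeff_mult using deg_R lead_R by (simp add: degree_monom_eq)
  ultimately have "coeff P (d - 1) = 1" by simp
  moreover have "w i * poly P (lam i) = 0" if "i < n" for i
    using that fin by (cases "w i = 0") (auto simp: P_def R_def \<Lambda>_def poly_prod)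
  then have "(\<Sum>i<n. w i * poly P (lam i)) = 0" by (intro sum.neutral) simp
  ultimately show False
    using weighted_sum_poly_eq_coeff[OF power_sums] deg_P d by simp
qed

lemma weight_eq_inverse_lagrange_denom:
  fixes lam w :: "nat \<Rightarrow> real"
  assumes power_sums: "\<forall>k<d. (\<Sum>i<d. w i * lam i ^ k) = (if k = d - 1 then 1 else 0)"
    and i: "i < d"
  shows "w i = 1 / lagrange_denom lam d i"
proof -
  have "1 = coeff (lagrange_basis lam d i) (d - 1)"
    using coeff_lagrange_basis[OF i] by simp
  also have "\<dots> = (\<Sum>k<d. w k * poly (lagrange_basis lam d i) (lam k))"
    using i by (intro weighted_sum_poly_eq_coeff[symmetric, OF power_sums]) (simp add: degree_lagrange_basis)
  also have "\<dots> = (\<Sum>k<d. if k = i then w i * lagrange_denom lam d i else 0)"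
    by (intro sum.cong) (auto simp: poly_lagrange_basis)
  also have "\<dots> = w i * lagrange_denom lam d i"
    using i by simp
  finally show ?thesis
    by (metis divide_self_if mult_eq_0_iff nonzero_eq_divide_eq zero_neq_one)
qed

definition moment :: "nat \<Rightarrow> (real \<times> real \<times> real) list \<Rightarrow> nat \<Rightarrow> real" where
  "moment d ts k = (\<Sum>(c, a, b)\<leftarrow>ts. c * a ^ k * b ^ (d - k))"

lemma rank_one_term_binomial:
  "rank_one_term d (c, a, b) x y = (\<Sum>k\<le>d. of_nat (d choose k) * x ^ k * y ^ (d - k) * (c * a ^ k * b ^ (d - k)))"
  unfolding rank_one_term_def binomial_ring
  by (simp add: sum_distrib_left power_mult_distrib mult_ac)

lemma sum_rank_one_terms_binomial:
  "(\<Sum>t\<leftarrow>ts. rank_one_term d t x y) = (\<Sum>k\<le>d. of_nat (d choose k) * x ^ k * y ^ (d - k) * moment d ts k)"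
proof (induction ts)
  case (Cons t ts)
  obtain c a b where "t = (c, a, b)" by (cases t)
  with Cons show ?case
    by (simp add: moment_def rank_one_term_binomial sum.distrib distrib_left)
qed (simp add: moment_def)

lemma binomial_form_coeffs_unique:
  fixes A B :: "nat \<Rightarrow> real"
  assumes eq: "\<And>x y. (\<Sum>k\<le>d. of_nat (d choose k) * x ^ k * y ^ (d - k) * A k)
                    = (\<Sum>k\<le>d. of_nat (d choose k) * x ^ k * y ^ (d - k) * B k)"
    and k: "k \<le> d"
  shows "A k = B k"
proof -
  define Q where "Q = (\<Sum>j\<le>d. monom (of_nat (d choose j) * (A j - B j)) j)"
  have "poly Q x = (\<Sum>j\<le>d. of_nat (d choose j) * x ^ j * 1 ^ (d - j) * A j)
      - (\<Sum>j\<le>d. of_nat (d choose j) * x ^ j * 1 ^ (d - j) * B j)" for x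
    unfolding Q_def poly_sum poly_monom sum_subtractf[symmetric]
    by (intro sum.cong) (simp_all add: algebra_simps)
  then have "poly Q x = 0" for x
    using eq[of x 1] by simp
  then have "Q = 0" using poly_all_0_iff_0 by blast
  then have "coeff Q k = 0" by simp
  then have "of_nat (d choose k) * (A k - B k) = 0"
    unfolding Q_def coeff_sum coeff_monom using k by (simp add: sum.delta)
  with k show ?thesis by simp
qed

lemma is_sym_decomp_binomial_iff:
  "is_sym_decomp d (\<lambda>x y. \<Sum>k\<le>d. of_nat (d choose k) * x ^ k * y ^ (d - k) * A k) ts
    \<longleftrightarrow> (\<forall>k\<le>d. moment d ts k = A k)"
  unfolding is_sym_decomp_def sum_rank_one_terms_binomial
  using binomial_form_coeffs_unique[of d "moment d ts" A] by auto

lemma is_sym_decomp_mset_cong: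
  assumes "mset (map (rank_one_term d) ts) = mset (map (rank_one_term d) ts')"
  shows "is_sym_decomp d f ts \<longleftrightarrow> is_sym_decomp d f ts'"
proof -
  have "(\<Sum>t\<leftarrow>ts. rank_one_term d t x y) = (\<Sum>t\<leftarrow>ts'. rank_one_term d t x y)" for x y
    using arg_cong[OF assms, of "\<lambda>M. \<Sum>\<^sub># (image_mset (\<lambda>g. g x y) M)"]
    by (simp add: sum_mset_sum_list comp_def flip: mset_map)
  then show ?thesis unfolding is_sym_decomp_def by simp
qed

definition tangent_form :: "nat \<Rightarrow> real \<Rightarrow> real \<Rightarrow> real \<Rightarrow> real" where
  "tangent_form d \<alpha> = (\<lambda>x y. x ^ (d - 1) * (\<alpha> * x + real d * y))"

definition tangent_moment :: "nat \<Rightarrow> real \<Rightarrow> nat \<Rightarrow> real" where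
  "tangent_moment d \<alpha> k = (if k = d then \<alpha> else if k = d - 1 then 1 else 0)"

lemma tangent_form_binomial:
  assumes "d \<ge> 1"
  shows "tangent_form d \<alpha>
    = (\<lambda>x y. \<Sum>k\<le>d. of_nat (d choose k) * x ^ k * y ^ (d - k) * tangent_moment d \<alpha> k)"
proof (intro ext)
  fix x y :: real
  obtain m where d: "d = Suc m" using assms by (cases d) auto
  have "(\<Sum>k\<le>d. of_nat (d choose k) * x ^ k * y ^ (d - k) * tangent_moment d \<alpha> k)
      = (\<Sum>k<m. of_nat (d choose k) * x ^ k * y ^ (d - k) * tangent_moment d \<alpha> k)
        + real d * x ^ m * y + \<alpha> * x ^ d"
    by (simp add: d tangent_moment_def flip: lessThan_Suc_atMost)
  also have "(\<Sum>k<m. of_nat (d choose k) * x ^ k * y ^ (d - k) * tangent_moment d \<alpha> k) = 0"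
    by (simp add: d tangent_moment_def)
  finally show "tangent_form d \<alpha> x y
      = (\<Sum>k\<le>d. of_nat (d choose k) * x ^ k * y ^ (d - k) * tangent_moment d \<alpha> k)"
    by (simp add: tangent_form_def d algebra_simps)
qed

lemma is_sym_decomp_tangent_form_iff:
  "d \<ge> 1 \<Longrightarrow> is_sym_decomp d (tangent_form d \<alpha>) ts \<longleftrightarrow> (\<forall>k\<le>d. moment d ts k = tangent_moment d \<alpha> k)"
  by (simp add: tangent_form_binomial is_sym_decomp_binomial_iff)

text \<open>Writing \<open>c (a x + b y)^d = c b^d (a/b x + y)^d\<close>, a term has weight \<open>c b^d\<close> and node \<open>a/b\<close>.
  If \<open>b = 0\<close> the weight vanishes and the node is the junk value \<open>a / 0 = 0\<close>.\<close>

definition term_weight :: "nat \<Rightarrow> real \<times> real \<times> real \<Rightarrow> real" where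
  "term_weight d = (\<lambda>(c, a, b). c * b ^ d)"

definition term_node :: "real \<times> real \<times> real \<Rightarrow> real" where
  "term_node = (\<lambda>(c, a, b). a / b)"

lemma moment_term_eq_weight_node:
  assumes "k \<le> d" and "k < d \<or> b \<noteq> 0"
  shows "c * a ^ k * b ^ (d - k) = term_weight d (c, a, b) * term_node (c, a, b) ^ k"
proof (cases "b = 0")
  case True
  then show ?thesis using assms by (simp add: term_weight_def zero_power)
next
  case False
  have "b ^ d = b ^ k * b ^ (d - k)"
    using assms(1) by (simp flip: power_add)
  then show ?thesis
    using False by (simp add: term_weight_def term_node_def power_divide)
qed

lemma moment_eq_weighted_power_sum:
  assumes "k \<le> d" and "k < d \<or> (\<forall>t\<in>set ts. snd (snd t) \<noteq> 0)"
  shows "moment d ts k = (\<Sum>i<length ts. term_weight d (ts ! i) * term_node (ts ! i) ^ k)"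
  unfolding moment_def sum_list_sum_nth atLeast0LessThan length_map
proof (intro sum.cong refl)
  fix i assume "i \<in> {..<length ts}"
  moreover obtain c a b where t: "ts ! i = (c, a, b)" by (cases "ts ! i")
  ultimately have "k < d \<or> b \<noteq> 0"
    using assms(2) by (metis nth_mem lessThan_iff snd_conv)
  then show "map (\<lambda>(c, a, b). c * a ^ k * b ^ (d - k)) ts ! i
      = term_weight d (ts ! i) * term_node (ts ! i) ^ k"
    using \<open>i \<in> {..<length ts}\<close> t moment_term_eq_weight_node[OF assms(1)] by simp
qed

lemma rank_one_term_normalize:
  assumes "b \<noteq> 0"
  shows "rank_one_term d (c, a, b) = rank_one_term d (term_weight d (c, a, b), term_node (c, a, b), 1)"
proof (intro ext)
  fix x y :: real
  have "a * x + b * y = b * (a / b * x + y)" using assms by (simp add: field_simps)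
  then show "rank_one_term d (c, a, b) x y
      = rank_one_term d (term_weight d (c, a, b), term_node (c, a, b), 1) x y"
    by (simp add: rank_one_term_def term_weight_def term_node_def power_mult_distrib)
qed

lemma tangent_decomp_power_sums:
  assumes "d \<ge> 1" and "is_sym_decomp d (tangent_form d \<alpha>) ts"
  shows "\<forall>k<d. (\<Sum>i<length ts. term_weight d (ts ! i) * term_node (ts ! i) ^ k)
    = (if k = d - 1 then 1 else 0)"
proof (intro allI impI)
  fix k assume "k < d"
  then have "moment d ts k = (if k = d - 1 then 1 else 0)"
    using assms by (simp add: is_sym_decomp_tangent_form_iff tangent_moment_def)
  with \<open>k < d\<close> show "(\<Sum>i<length ts. term_weight d (ts ! i) * term_node (ts ! i) ^ k)
      = (if k = d - 1 then 1 else 0)"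
    by (simp add: moment_eq_weighted_power_sum)
qed

lemma tangent_decomp_length_ge:
  assumes d: "d \<ge> 1" and decomp: "is_sym_decomp d (tangent_form d \<alpha>) ts"
  shows "d \<le> length ts"
proof -
  let ?S = "{i. i < length ts \<and> term_weight d (ts ! i) \<noteq> 0}"
  have "d \<le> card ((\<lambda>i. term_node (ts ! i)) ` ?S)"
    by (rule card_support_nodes_ge[OF tangent_decomp_power_sums[OF d decomp] d])
  also have "\<dots> \<le> card ?S" by (rule card_image_le) simp
  also have "\<dots> \<le> card {..<length ts}" by (intro card_mono) auto
  finally show ?thesis by simp
qed

definition lagrange_terms :: "nat \<Rightarrow> (nat \<Rightarrow> real) \<Rightarrow> (real \<times> real \<times> real) list" where
  "lagrange_terms d lam = map (\<lambda>i. (1 / lagrange_denom lam d i, lam i, 1)) [0..<d]"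

lemma is_sym_decomp_lagrange_terms:
  assumes d: "d \<ge> 1" and inj: "inj_on lam {..<d}" and sum: "(\<Sum>i<d. lam i) = \<alpha>"
  shows "is_sym_decomp d (tangent_form d \<alpha>) (lagrange_terms d lam)"
  unfolding is_sym_decomp_tangent_form_iff[OF d]
proof (intro allI impI)
  fix k assume "k \<le> d"
  have "moment d (lagrange_terms d lam) k = (\<Sum>i<d. lam i ^ k / lagrange_denom lam d i)"
    by (simp add: moment_def lagrange_terms_def interv_sum_list_conv_sum_set_nat atLeast0LessThan)
  also have "\<dots> = tangent_moment d \<alpha> k"
    using \<open>k \<le> d\<close> sum d sum_power_div_lagrange_denom[OF inj, of k]
      sum_power_degree_div_lagrange_denom[OF inj d]
    by (cases "k = d") (auto simp: tangent_moment_def)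
  finally show "moment d (lagrange_terms d lam) k = tangent_moment d \<alpha> k" .
qed

lemma mset_lagrange_terms:
  "mset (map (rank_one_term d) (lagrange_terms d lam))
    = image_mset (\<lambda>i. \<lambda>x y. (lam i * x + y) ^ d / (\<Prod>j\<in>{..<d} - {i}. (lam i - lam j))) (mset [0..<d])"
  unfolding lagrange_terms_def mset_map image_mset.compositionality
  by (intro image_mset_cong ext) (simp add: rank_one_term_def lagrange_denom_def)

lemma exists_inj_on_sum_eq:
  assumes "d \<ge> 1"
  shows "\<exists>lam :: nat \<Rightarrow> real. inj_on lam {..<d} \<and> (\<Sum>i<d. lam i) = \<alpha>"
proof -
  define c where "c = (\<alpha> - (\<Sum>i<d. real i)) / real d"
  have "inj_on (\<lambda>i. real i + c) {..<d}" by (simp add: inj_on_def)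
  moreover have "(\<Sum>i<d. real i + c) = \<alpha>"
    using assms by (simp add: sum.distrib c_def)
  ultimately show ?thesis by blast
qed

lemma real_sym_rank_tangent_form:
  assumes d: "d \<ge> 1"
  shows "real_sym_rank d (tangent_form d \<alpha>) = d"
  unfolding real_sym_rank_def
proof (rule Least_equality)
  obtain lam where "inj_on lam {..<d}" "(\<Sum>i<d. lam i) = \<alpha>"
    using exists_inj_on_sum_eq[OF d] by blast
  then have "is_sym_decomp d (tangent_form d \<alpha>) (lagrange_terms d lam)"
    by (rule is_sym_decomp_lagrange_terms[OF d])
  moreover have "length (lagrange_terms d lam) = d" by (simp add: lagrange_terms_def)
  ultimately show "\<exists>ts. length ts = d \<and> is_sym_decomp d (tangent_form d \<alpha>) ts"
    by blast
qed (use tangent_decomp_length_ge[OF d] in blast)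

lemma all_and_inj_on_if_card_image_ge:
  assumes "n \<le> card (f ` {i. i < n \<and> P i})"
  shows "\<forall>i<n. P i" and "inj_on f {..<n}"
proof -
  let ?S = "{i. i < n \<and> P i}"
  have "card (f ` ?S) \<le> card ?S" by (rule card_image_le) simp
  moreover have "card ?S \<le> n"
    using card_mono[of "{..<n}" ?S] by auto
  ultimately have "card ?S = n" and card_f: "card (f ` ?S) = card ?S"
    using assms by linarith+
  then have S: "?S = {..<n}"
    by (intro card_subset_eq) auto
  then show "\<forall>i<n. P i" by blast
  show "inj_on f {..<n}"
    using card_f S by (metis eq_card_imp_inj_on finite_lessThan)
qed

lemma tangent_decomp_length_eq_lagrange_terms:
  assumes d: "d \<ge> 1" and len: "length ts = d" and decomp: "is_sym_decomp d (tangent_form d \<alpha>) ts"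
  shows "\<exists>lam. inj_on lam {..<d} \<and> (\<Sum>i<d. lam i) = \<alpha>
    \<and> map (rank_one_term d) ts = map (rank_one_term d) (lagrange_terms d lam)"
proof (intro exI conjI)
  define lam where "lam i = term_node (ts ! i)" for i
  define w where "w i = term_weight d (ts ! i)" for i
  have power_sums: "\<forall>k<d. (\<Sum>i<d. w i * lam i ^ k) = (if k = d - 1 then 1 else 0)"
    using tangent_decomp_power_sums[OF d decomp] len by (simp add: w_def lam_def)
  then have "d \<le> card (lam ` {i. i < d \<and> w i \<noteq> 0})"
    by (rule card_support_nodes_ge[OF _ d])
  then have w_nonzero: "\<forall>i<d. w i \<noteq> 0" and inj: "inj_on lam {..<d}"
    by (rule all_and_inj_on_if_card_image_ge)+
  show "inj_on lam {..<d}" by (fact inj)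
  have w_eq: "w i = 1 / lagrange_denom lam d i" if "i < d" for i
    by (rule weight_eq_inverse_lagrange_denom[OF power_sums that])
  have b_nonzero: "snd (snd (ts ! i)) \<noteq> 0" if "i < d" for i
    using w_nonzero that d by (cases "ts ! i") (auto simp: w_def term_weight_def)
  then have "\<forall>t\<in>set ts. snd (snd t) \<noteq> 0"
    using len by (metis in_set_conv_nth)
  then have "moment d ts d = (\<Sum>i<d. w i * lam i ^ d)"
    using len by (simp add: moment_eq_weighted_power_sum w_def lam_def)
  also have "\<dots> = (\<Sum>i<d. lam i ^ d / lagrange_denom lam d i)"
    using w_eq by simp
  also have "\<dots> = (\<Sum>i<d. lam i)"
    by (rule sum_power_degree_div_lagrange_denom[OF inj d])
  finally show "(\<Sum>i<d. lam i) = \<alpha>"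
    using decomp d by (simp add: is_sym_decomp_tangent_form_iff tangent_moment_def)
  show "map (rank_one_term d) ts = map (rank_one_term d) (lagrange_terms d lam)"
  proof (rule nth_equalityI)
    fix i assume "i < length (map (rank_one_term d) ts)"
    then have i: "i < d" using len by simp
    obtain c a b where t: "ts ! i = (c, a, b)" by (cases "ts ! i")
    then show "map (rank_one_term d) ts ! i = map (rank_one_term d) (lagrange_terms d lam) ! i"
      using i len b_nonzero[OF i] w_eq[OF i] rank_one_term_normalize[of b d c a]
      by (simp add: lagrange_terms_def w_def lam_def)
  qed (simp add: len lagrange_terms_def)
qed

theorem lemma3p18:
  fixes d :: nat and \<alpha> :: real
  assumes "d \<ge> 2"
  shows "real_sym_rank d (\<lambda>x y. x ^ (d - 1) * (\<alpha> * x + real d * y)) = d \<and>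
    (\<forall>ts. length ts = d \<longrightarrow>
      (is_sym_decomp d (\<lambda>x y. x ^ (d - 1) * (\<alpha> * x + real d * y)) ts \<longleftrightarrow>
       (\<exists>lam :: nat \<Rightarrow> real. inj_on lam {..<d} \<and> (\<Sum>i<d. lam i) = \<alpha> \<and>
          mset (map (rank_one_term d) ts) =
          image_mset (\<lambda>i. \<lambda>x y. (lam i * x + y) ^ d / (\<Prod>j\<in>{..<d} - {i}. (lam i - lam j)))
            (mset [0..<d]))))"
proof -
  have d: "d \<ge> 1" using assms by simp
  have "is_sym_decomp d (tangent_form d \<alpha>) ts \<longleftrightarrow>
       (\<exists>lam. inj_on lam {..<d} \<and> (\<Sum>i<d. lam i) = \<alpha> \<and>
          mset (map (rank_one_term d) ts) = mset (map (rank_one_term d) (lagrange_terms d lam)))"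
    if "length ts = d" for ts
    using tangent_decomp_length_eq_lagrange_terms[OF d that]
      is_sym_decomp_mset_cong is_sym_decomp_lagrange_terms[OF d] by metis
  then show ?thesis
    using real_sym_rank_tangent_form[OF d]
    unfolding tangent_form_def mset_lagrange_terms by blast
qed

end
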